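(* Let $1<p\leqslant2$, let $0<\varepsilon\leqslant1$, and set $c=c(\varepsilon,p)\coloneqq\frac14\,\varepsilon^{\frac{2(p+1)}{p}}(p-1)$. Let $n,d$ be positive integers with $n\geqslant 2d/c$, and let $\boldsymbol{X}$ be a dissociated, $d$-dimensional random array on $[n]$ whose entries take values in a measurable space $\mathcal{X}$. Then for every measurable $f\colon\mathcal{X}^{\binom{[n]}{d}}\to\mathbb{R}$ with $\mathbb{E}[f(\boldsymbol{X})]=0$ and $\|f(\boldsymbol{X})\|_{L_p}=1$ there exists an interval $I$ of $[n]$ with $|I|\geqslant cn$ such that for every $J\subseteq I$ with $|J|\geqslant d$, \[ \mathbb{P}\big(\big|\mathbb{E}[f(\boldsymbol{X})\,|\,\mathcal{F}_J]\big|\leqslant\varepsilon\big)\geqslant1-\varepsilon. \]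
   Context: $[n]=\{1,\dots,n\}$, $\binom{I}{d}$ is the set of $d$-element subsets of $I$. A $d$-dimensional random array on $[n]$ is a process $\boldsymbol{X}=\langle X_s:s\in\binom{[n]}{d}\rangle$; for $J\subseteq[n]$ with $|J|\geqslant d$, $\mathcal{F}_J=\sigma(\{X_s:s\in\binom{J}{d}\})$. $\boldsymbol{X}$ is dissociated if for every $J,K\subseteq[n]$ with $|J|,|K|\geqslant d$ and $\max(J)<\min(K)$ the $\sigma$-algebras $\mathcal{F}_J$ and $\mathcal{F}_K$ are independent. An interval of $[n]$ is a set of consecutive integers. *)

theory Defs
  imports "HOL-Probability.Probability"
begin

definition dsubsets :: "nat \<Rightarrow> nat set \<Rightarrow> nat set set" where
  "dsubsets d J = {s. s \<subseteq> J \<and> card s = d}"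

definition arr_vec :: "nat \<Rightarrow> nat set \<Rightarrow> (nat set \<Rightarrow> 'a \<Rightarrow> 'b) \<Rightarrow> 'a \<Rightarrow> (nat set \<Rightarrow> 'b)" where
  "arr_vec d J X \<omega> = (\<lambda>s\<in>dsubsets d J. X s \<omega>)"

definition arr_sigma :: "'a measure \<Rightarrow> 'b measure \<Rightarrow> (nat set \<Rightarrow> 'a \<Rightarrow> 'b) \<Rightarrow> nat \<Rightarrow> nat set \<Rightarrow> 'a measure" where
  "arr_sigma M N X d J =
     sigma (space M) (\<Union>s\<in>dsubsets d J. {X s -` A \<inter> space M | A. A \<in> sets N})"

definition dissociated :: "'a measure \<Rightarrow> 'b measure \<Rightarrow> (nat set \<Rightarrow> 'a \<Rightarrow> 'b) \<Rightarrow> nat \<Rightarrow> nat \<Rightarrow> bool" where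
  "dissociated M N X d n \<longleftrightarrow>
     (\<forall>J K. J \<subseteq> {1..n} \<and> K \<subseteq> {1..n} \<and> card J \<ge> d \<and> card K \<ge> d \<and> J \<noteq> {} \<and> K \<noteq> {}
        \<and> Max J < Min K \<longrightarrow>
        prob_space.indep_set M (sets (arr_sigma M N X d J)) (sets (arr_sigma M N X d K)))"

definition cconst :: "real \<Rightarrow> real \<Rightarrow> real" where
  "cconst \<epsilon> p = 1/4 * \<epsilon> powr (2 * (p + 1) / p) * (p - 1)"

end

theory Submission
  imports Defs
begin

text \<open>
  Write \<open>Y = f(X)\<close>. For \<open>1 < p \<le> 2\<close> the space \<open>L\<^sub>p\<close> is 2-uniformly convex,
  \<open>\<parallel>z\<parallel>\<^sup>2 + (p - 1) \<parallel>w\<parallel>\<^sup>2 \<le> (\<parallel>z + w\<parallel>\<^sup>2 + \<parallel>z - w\<parallel>\<^sup>2) / 2\<close>, and since conditional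
  expectations are \<open>L\<^sub>p\<close>-contractions this upgrades to
  \<open>\<parallel>E[Z|F]\<parallel>\<^sup>2 + (p - 1) \<parallel>Z - E[Z|F]\<parallel>\<^sup>2 \<le> \<parallel>Z\<parallel>\<^sup>2\<close>. Cut \<open>[n]\<close> into \<open>k \<ge> 1/(4c)\<close>
  consecutive blocks \<open>B\<^sub>i\<close> of length \<open>L \<ge> cn\<close> and let \<open>\<Phi>\<^sub>i\<close> be the conditional
  expectation of \<open>Y\<close> given the first \<open>i\<close> blocks; telescoping gives
  \<open>(p - 1) \<Sum>\<^sub>i \<parallel>\<Phi>\<^sub>i\<^sub>+\<^sub>1 - \<Phi>\<^sub>i\<parallel>\<^sup>2 \<le> \<parallel>Y\<parallel>\<^sup>2 = 1\<close>. By dissociation the first \<open>i\<close> blocks are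
  independent of \<open>B\<^sub>i\<^sub>+\<^sub>1\<close>, so \<open>E[\<Phi>\<^sub>i | F(B\<^sub>i\<^sub>+\<^sub>1)] = E Y = 0\<close> and hence
  \<open>\<parallel>E[Y | F(B\<^sub>i\<^sub>+\<^sub>1)]\<parallel> \<le> \<parallel>\<Phi>\<^sub>i\<^sub>+\<^sub>1 - \<Phi>\<^sub>i\<parallel>\<close>. Some block therefore has
  \<open>\<parallel>E[Y | F(B)]\<parallel>\<^sup>2 \<le> 1/((p - 1) k) \<le> \<epsilon>\<^bsup>2(p+1)/p\<^esup>\<close>; by contraction the same holds for
  every \<open>J \<subseteq> B\<close>, and Markov's inequality for \<open>|\<cdot>|\<^sup>p\<close> yields the claim.
\<close>

section \<open>Real inequalities\<close>

lemma Youngs_inequality_nonneg: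
  fixes a b \<alpha> \<beta> :: real
  assumes "0 \<le> \<alpha>" "0 \<le> \<beta>" "\<alpha> + \<beta> = 1" "0 \<le> a" "0 \<le> b"
  shows "a powr \<alpha> * b powr \<beta> \<le> \<alpha> * a + \<beta> * b"
proof (cases "a = 0 \<or> b = 0")
  case True
  then show ?thesis using assms by auto
next
  case False
  then show ?thesis using Youngs_inequality_0[of \<alpha> \<beta> a b] assms by auto
qed

lemma concave_on_powr:
  fixes r :: real
  assumes r: "0 < r" "r \<le> 1"
  shows "concave_on {0..} (\<lambda>x. x powr r)"
proof (rule concave_on_linorderI)
  fix t x y :: real
  assume t: "0 < t" "t < 1" and xy: "x \<in> {0..}" "y \<in> {0..}" "x < y"
  define m where "m = (1 - t) * x + t * y"
  have m: "0 < m" using t xy unfolding m_def by (intro add_nonneg_pos mult_nonneg_nonneg mult_pos_pos) auto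
  have "x powr r * m powr (1 - r) \<le> r * x + (1 - r) * m"
       "y powr r * m powr (1 - r) \<le> r * y + (1 - r) * m"
    using Youngs_inequality_nonneg[of r "1 - r"] r xy m by auto
  then have "(1 - t) * (x powr r * m powr (1 - r)) + t * (y powr r * m powr (1 - r))
      \<le> (1 - t) * (r * x + (1 - r) * m) + t * (r * y + (1 - r) * m)"
    using t by (intro add_mono mult_left_mono) auto
  then have "((1 - t) * x powr r + t * y powr r) * m powr (1 - r)
      \<le> (1 - t) * (r * x + (1 - r) * m) + t * (r * y + (1 - r) * m)"
    by (simp add: algebra_simps)
  also have "\<dots> = m powr r * m powr (1 - r)"
    using m by (simp add: m_def algebra_simps flip: powr_add)
  finally show "(1 - t) * x powr r + t * y powr r \<le> ((1 - t) *\<^sub>R x + t *\<^sub>R y) powr r"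
    using m by (simp add: m_def)
qed simp

lemma powr_one_plus_le:
  fixes r x :: real
  assumes "0 \<le> r" "r \<le> 1" "0 \<le> x"
  shows "(1 + x) powr r \<le> 1 + r * x"
  using Youngs_inequality_nonneg[of r "1 - r" "1 + x" 1] assms by (simp add: algebra_simps)

lemma power2_powr_half:
  fixes x p :: real
  shows "(x\<^sup>2) powr (p / 2) = \<bar>x\<bar> powr p"
proof -
  have "(x\<^sup>2) powr (p / 2) = (\<bar>x\<bar> powr 2) powr (p / 2)" by simp
  also have "\<dots> = \<bar>x\<bar> powr p" by (subst powr_powr) simp
  finally show ?thesis .
qed

lemma power_mean_powr_le:
  fixes p a b :: real
  assumes "0 < p" "p \<le> 2" "0 \<le> a" "0 \<le> b"
  shows "(a powr p + b powr p) / 2 \<le> ((a\<^sup>2 + b\<^sup>2) / 2) powr (p / 2)"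
proof -
  have "(1 - 1/2) * (a\<^sup>2) powr (p / 2) + 1/2 * (b\<^sup>2) powr (p / 2)
      \<le> ((1 - 1/2) *\<^sub>R a\<^sup>2 + (1/2) *\<^sub>R b\<^sup>2) powr (p / 2)"
    using assms by (intro concave_onD[OF concave_on_powr]) auto
  then show ?thesis
    using assms by (simp add: power2_powr_half add_divide_distrib)
qed

lemma convex_on_abs_powr:
  fixes p :: real
  assumes "1 \<le> p"
  shows "convex_on UNIV (\<lambda>x. \<bar>x\<bar> powr p)"
proof (rule convex_onI)
  fix t x y :: real
  assume t: "0 < t" "t < 1"
  have "\<bar>(1 - t) * x + t * y\<bar> \<le> (1 - t) * (\<bar>x\<bar> powr p) powr (1 / p) + t * (\<bar>y\<bar> powr p) powr (1 / p)"
    using assms t abs_triangle_ineq[of "(1 - t) * x" "t * y"] by (simp add: powr_powr abs_mult)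
  also have "\<dots> \<le> ((1 - t) * \<bar>x\<bar> powr p + t * \<bar>y\<bar> powr p) powr (1 / p)"
    using assms t by (intro concave_onD[OF concave_on_powr, simplified]) auto
  finally have "\<bar>(1 - t) * x + t * y\<bar> powr p \<le> (((1 - t) * \<bar>x\<bar> powr p + t * \<bar>y\<bar> powr p) powr (1 / p)) powr p"
    using assms by (intro powr_mono2) auto
  then show "\<bar>(1 - t) *\<^sub>R x + t *\<^sub>R y\<bar> powr p \<le> (1 - t) * \<bar>x\<bar> powr p + t * \<bar>y\<bar> powr p"
    using assms t by (simp add: powr_powr)
qed auto

lemma powr_one_plus_plus_one_minus_ge_2:
  fixes s x :: real
  assumes "s \<le> 0" "0 \<le> x" "x < 1"
  shows "2 \<le> (1 + x) powr s + (1 - x) powr s"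
proof -
  define u v where "u = (1 + x) powr s" and "v = (1 - x) powr s"
  have "(1 + x) * (1 - x) \<le> 1" by (simp add: algebra_simps)
  moreover have "0 < (1 + x) * (1 - x)" using assms by simp
  ultimately have "1 \<le> u * v"
    using powr_mono2'[of s "(1 + x) * (1 - x)" 1] assms by (simp add: u_def v_def powr_mult)
  moreover have "4 * (u * v) \<le> (u + v)\<^sup>2"
    using zero_le_power2[of "u - v"] by (simp add: power2_eq_square algebra_simps)
  ultimately have "2\<^sup>2 \<le> (u + v)\<^sup>2" by simp
  then show ?thesis
    unfolding u_def v_def by (rule power2_le_imp_le) simp
qed

lemma powr_one_plus_minus_one_minus_ge:
  fixes p x :: real
  assumes p: "1 < p" "p \<le> 2" and x: "0 \<le> x" "x < 1"
  shows "2 * (p - 1) * x \<le> (1 + x) powr (p - 1) - (1 - x) powr (p - 1)"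
proof -
  let ?k = "\<lambda>x::real. (1 + x) powr (p - 1) - (1 - x) powr (p - 1) - 2 * (p - 1) * x"
  have "?k 0 \<le> ?k x"
  proof (rule DERIV_nonneg_imp_nondecreasing[OF x(1)])
    fix y assume y: "0 \<le> y" "y \<le> x"
    have "(?k has_real_derivative
        (p - 1) * ((1 + y) powr (p - 2) + (1 - y) powr (p - 2) - 2)) (at y)"
      using y x by (auto intro!: derivative_eq_intros simp: algebra_simps)
    moreover have "0 \<le> (p - 1) * ((1 + y) powr (p - 2) + (1 - y) powr (p - 2) - 2)"
      using powr_one_plus_plus_one_minus_ge_2[of "p - 2" y] p x y by simp
    ultimately show "\<exists>d. (?k has_real_derivative d) (at y) \<and> 0 \<le> d" by blast
  qed
  then show ?thesis by simp
qed

lemma powr_one_plus_plus_one_minus_ge: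
  fixes p x :: real
  assumes p: "1 < p" "p \<le> 2" and x: "0 \<le> x" "x \<le> 1"
  shows "2 + p * (p - 1) * x\<^sup>2 \<le> (1 + x) powr p + (1 - x) powr p"
proof -
  let ?h = "\<lambda>x::real. (1 + x) powr p + (1 - x) powr p - p * (p - 1) * x\<^sup>2"
  have "?h 0 \<le> ?h x"
  proof (rule DERIV_nonneg_imp_increasing_open[OF x(1)])
    fix y assume y: "0 < y" "y < x"
    have "(?h has_real_derivative
        p * ((1 + y) powr (p - 1) - (1 - y) powr (p - 1) - 2 * (p - 1) * y)) (at y)"
      using y x by (auto intro!: derivative_eq_intros simp: algebra_simps)
    moreover have "0 \<le> p * ((1 + y) powr (p - 1) - (1 - y) powr (p - 1) - 2 * (p - 1) * y)"
      using powr_one_plus_minus_one_minus_ge[OF p, of y] p x y by simp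
    ultimately show "\<exists>d. (?h has_real_derivative d) (at y) \<and> 0 \<le> d" by blast
  next
    show "continuous_on {0..x} ?h"
      using x p by (intro continuous_intros continuous_on_powr') auto
  qed
  then show ?thesis by simp
qed

lemma two_point_inequality_ordered:
  fixes p a b :: real
  assumes p: "1 < p" "p \<le> 2" and ab: "0 \<le> b" "b \<le> a"
  shows "(a\<^sup>2 + (p - 1) * b\<^sup>2) powr (p / 2) \<le> ((a + b) powr p + (a - b) powr p) / 2"
proof (cases "a = 0")
  case True
  with ab show ?thesis by simp
next
  case False
  define t where "t = b / a"
  have a: "0 < a" and t: "0 \<le> t" "t \<le> 1" and b: "b = a * t"
    using False ab by (auto simp: t_def)
  have "a\<^sup>2 + (p - 1) * b\<^sup>2 = a\<^sup>2 * (1 + (p - 1) * t\<^sup>2)"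
    by (simp add: b power_mult_distrib algebra_simps)
  then have "(a\<^sup>2 + (p - 1) * b\<^sup>2) powr (p / 2) = a powr p * (1 + (p - 1) * t\<^sup>2) powr (p / 2)"
    using a p by (simp add: powr_mult power2_powr_half)
  also have "\<dots> \<le> a powr p * (1 + p / 2 * ((p - 1) * t\<^sup>2))"
    using p t by (intro mult_left_mono powr_one_plus_le) auto
  also have "\<dots> \<le> a powr p * (((1 + t) powr p + (1 - t) powr p) / 2)"
    using powr_one_plus_plus_one_minus_ge[OF p t] by (intro mult_left_mono) auto
  also have "\<dots> = ((a * (1 + t)) powr p + (a * (1 - t)) powr p) / 2"
    using a t powr_mult[of a "1 + t" p] powr_mult[of a "1 - t" p] by (simp add: algebra_simps)
  also have "\<dots> = ((a + b) powr p + (a - b) powr p) / 2"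
    by (simp add: b algebra_simps)
  finally show ?thesis .
qed

lemma two_point_inequality:
  fixes p a b :: real
  assumes p: "1 < p" "p \<le> 2"
  shows "(a\<^sup>2 + (p - 1) * b\<^sup>2) powr (p / 2) \<le> (\<bar>a + b\<bar> powr p + \<bar>a - b\<bar> powr p) / 2"
proof -
  have ordered: "(a\<^sup>2 + (p - 1) * b\<^sup>2) powr (p / 2) \<le> (\<bar>a + b\<bar> powr p + \<bar>a - b\<bar> powr p) / 2"
    if "\<bar>b\<bar> \<le> \<bar>a\<bar>" for a b :: real
  proof -
    have "\<bar>a + b\<bar> = \<bar>a\<bar> + \<bar>b\<bar> \<and> \<bar>a - b\<bar> = \<bar>a\<bar> - \<bar>b\<bar> \<or> \<bar>a + b\<bar> = \<bar>a\<bar> - \<bar>b\<bar> \<and> \<bar>a - b\<bar> = \<bar>a\<bar> + \<bar>b\<bar>"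
      using that by (cases "0 \<le> a"; cases "0 \<le> b") (simp_all add: abs_if)
    then have "\<bar>a + b\<bar> powr p + \<bar>a - b\<bar> powr p = (\<bar>a\<bar> + \<bar>b\<bar>) powr p + (\<bar>a\<bar> - \<bar>b\<bar>) powr p"
      by auto
    moreover have "(\<bar>a\<bar>\<^sup>2 + (p - 1) * \<bar>b\<bar>\<^sup>2) powr (p / 2)
        \<le> ((\<bar>a\<bar> + \<bar>b\<bar>) powr p + (\<bar>a\<bar> - \<bar>b\<bar>) powr p) / 2"
      using p that by (intro two_point_inequality_ordered) auto
    ultimately show ?thesis by simp
  qed
  show ?thesis
  proof (cases "\<bar>b\<bar> \<le> \<bar>a\<bar>")
    case False
    then have "a\<^sup>2 \<le> b\<^sup>2" by (simp add: abs_le_square_iff)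
    then have "0 \<le> (2 - p) * (b\<^sup>2 - a\<^sup>2)" using p by simp
    then have "a\<^sup>2 + (p - 1) * b\<^sup>2 \<le> b\<^sup>2 + (p - 1) * a\<^sup>2"
      by (simp add: algebra_simps)
    then have "(a\<^sup>2 + (p - 1) * b\<^sup>2) powr (p / 2) \<le> (b\<^sup>2 + (p - 1) * a\<^sup>2) powr (p / 2)"
      using p by (intro powr_mono2) auto
    also have "\<dots> \<le> (\<bar>b + a\<bar> powr p + \<bar>b - a\<bar> powr p) / 2"
      using False by (intro ordered) simp
    finally show ?thesis by (simp add: abs_minus_commute add.commute)
  qed (rule ordered)
qed

lemma powr_le_powr_imp_le:
  fixes x y r :: real
  assumes "0 < r" "0 \<le> x" "0 \<le> y" "x powr r \<le> y powr r"
  shows "x \<le> y"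
  using assms by (meson not_le powr_less_mono2)

lemma weighted_powr_add_le:
  fixes r a b u v :: real
  assumes r: "0 < r" "r \<le> 1" and ab: "0 \<le> a" "0 \<le> b" "a + b = 1" and uv: "0 \<le> u" "0 \<le> v"
  shows "a powr (1 - r) * u powr r + b powr (1 - r) * v powr r \<le> (u + v) powr r"
proof (cases "u + v = 0")
  case True
  with uv have "u = 0" "v = 0" by auto
  then show ?thesis by simp
next
  case False
  define w where "w = u + v"
  have w: "0 < w" using False uv by (simp add: w_def)
  have "a powr (1 - r) * (u / w) powr r \<le> (1 - r) * a + r * (u / w)"
       "b powr (1 - r) * (v / w) powr r \<le> (1 - r) * b + r * (v / w)"
    using Youngs_inequality_nonneg[of "1 - r" r a "u / w"] Youngs_inequality_nonneg[of "1 - r" r b "v / w"]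
      r ab uv w by auto
  then have "(a powr (1 - r) * u powr r + b powr (1 - r) * v powr r) / w powr r
      \<le> (1 - r) * (a + b) + r * ((u + v) / w)"
    using uv w by (simp add: powr_divide add_divide_distrib algebra_simps)
  also have "\<dots> = 1" using ab w by (simp add: w_def)
  finally show ?thesis using w by (simp add: w_def divide_le_eq)
qed

lemma ex_card_mult_le_sum:
  fixes f :: "'a \<Rightarrow> real"
  assumes "finite A" "A \<noteq> {}"
  shows "\<exists>i\<in>A. real (card A) * f i \<le> sum f A"
proof -
  have "Min (f ` A) \<in> f ` A" using assms by (intro Min_in) auto
  then obtain i where i: "i \<in> A" "f i = Min (f ` A)" by auto
  then have "real (card A) * f i \<le> sum f A"
    using assms by (intro sum_bounded_below) auto
  with i show ?thesis by blast
qed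

section \<open>\<open>L\<^sub>p\<close> norms\<close>

text \<open>\<open>Lp_norm M p g\<close> is only meaningful when \<open>in_Lp M p g\<close>: otherwise the Bochner
  integral of \<open>|g|\<^sup>p\<close>, and with it the norm, is \<open>0\<close>.\<close>

definition in_Lp :: "'a measure \<Rightarrow> real \<Rightarrow> ('a \<Rightarrow> real) \<Rightarrow> bool" where
  "in_Lp M p g \<longleftrightarrow> g \<in> borel_measurable M \<and> integrable M (\<lambda>x. \<bar>g x\<bar> powr p)"

definition Lp_norm :: "'a measure \<Rightarrow> real \<Rightarrow> ('a \<Rightarrow> real) \<Rightarrow> real" where
  "Lp_norm M p g = (\<integral>x. \<bar>g x\<bar> powr p \<partial>M) powr (1 / p)"

lemma Lp_norm_nonneg: "0 \<le> Lp_norm M p g"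
  by (simp add: Lp_norm_def)

lemma Lp_norm_powr:
  assumes "0 < p"
  shows "Lp_norm M p g powr p = (\<integral>x. \<bar>g x\<bar> powr p \<partial>M)"
  using assms by (simp add: Lp_norm_def powr_powr integral_nonneg_AE)

lemma Lp_norm_power2:
  assumes "0 < p"
  shows "Lp_norm M p g ^ 2 = (\<integral>x. \<bar>g x\<bar> powr p \<partial>M) powr (2 / p)"
  using assms by (simp add: Lp_norm_def powr_powr integral_nonneg_AE flip: powr_numeral)

lemma Lp_norm_cmult:
  assumes "0 < p"
  shows "Lp_norm M p (\<lambda>x. c * g x) = \<bar>c\<bar> * Lp_norm M p g"
  using assms by (simp add: Lp_norm_def abs_mult powr_mult powr_powr integral_nonneg_AE)

lemma Lp_norm_mono:
  assumes "0 < p" "(\<integral>x. \<bar>u x\<bar> powr p \<partial>M) \<le> (\<integral>x. \<bar>v x\<bar> powr p \<partial>M)"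
  shows "Lp_norm M p u \<le> Lp_norm M p v"
  unfolding Lp_norm_def using assms by (intro powr_mono2) (auto intro: integral_nonneg_AE)

lemma Lp_norm_cong_AE:
  assumes "u \<in> borel_measurable M" "v \<in> borel_measurable M" "AE x in M. u x = v x"
  shows "Lp_norm M p u = Lp_norm M p v"
proof -
  have "(\<integral>x. \<bar>u x\<bar> powr p \<partial>M) = (\<integral>x. \<bar>v x\<bar> powr p \<partial>M)"
    using assms by (intro integral_cong_AE) auto
  then show ?thesis by (simp add: Lp_norm_def)
qed

lemma in_Lp_cmult:
  assumes "in_Lp M p g"
  shows "in_Lp M p (\<lambda>x. c * g x)"
proof -
  have [measurable]: "g \<in> borel_measurable M" using assms by (simp add: in_Lp_def)
  show ?thesis using assms by (simp add: in_Lp_def abs_mult powr_mult)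
qed

lemma abs_add_powr_le:
  fixes a b p :: real
  assumes "0 \<le> p"
  shows "\<bar>a + b\<bar> powr p \<le> 2 powr p * (\<bar>a\<bar> powr p + \<bar>b\<bar> powr p)"
proof -
  have "\<bar>a + b\<bar> powr p \<le> (2 * max \<bar>a\<bar> \<bar>b\<bar>) powr p"
    using assms by (intro powr_mono2) auto
  also have "\<dots> \<le> 2 powr p * (\<bar>a\<bar> powr p + \<bar>b\<bar> powr p)"
    by (auto simp: powr_mult max_def)
  finally show ?thesis .
qed

lemma in_Lp_add:
  assumes "0 \<le> p" "in_Lp M p g" "in_Lp M p h"
  shows "in_Lp M p (\<lambda>x. g x + h x)"
proof -
  have [measurable]: "g \<in> borel_measurable M" "h \<in> borel_measurable M"
    using assms by (auto simp: in_Lp_def)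
  have "integrable M (\<lambda>x. 2 powr p * (\<bar>g x\<bar> powr p + \<bar>h x\<bar> powr p))"
    using assms by (auto simp: in_Lp_def)
  then have "integrable M (\<lambda>x. \<bar>g x + h x\<bar> powr p)"
    by (rule Bochner_Integration.integrable_bound) (auto intro: abs_add_powr_le[OF assms(1)])
  then show ?thesis by (simp add: in_Lp_def)
qed

lemma in_Lp_diff:
  assumes "0 \<le> p" "in_Lp M p g" "in_Lp M p h"
  shows "in_Lp M p (\<lambda>x. g x - h x)"
  using in_Lp_add[OF assms(1,2) in_Lp_cmult[OF assms(3), of "-1"]] by simp

lemma (in finite_measure) in_Lp_imp_integrable:
  assumes "1 \<le> p" "in_Lp M p g"
  shows "integrable M g"
proof -
  have [measurable]: "g \<in> borel_measurable M" using assms by (simp add: in_Lp_def)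
  have le: "\<bar>g x\<bar> \<le> 1 + \<bar>g x\<bar> powr p" for x
  proof (cases "\<bar>g x\<bar> \<le> 1")
    case False
    then have "\<bar>g x\<bar> powr 1 \<le> \<bar>g x\<bar> powr p" using assms by (intro powr_mono) auto
    then show ?thesis by simp
  qed (simp add: add_increasing2)
  have "integrable M (\<lambda>x. 1 + \<bar>g x\<bar> powr p)"
    using assms by (simp add: in_Lp_def)
  then show ?thesis
    by (rule Bochner_Integration.integrable_bound) (auto intro: le order_trans)
qed

lemma (in finite_measure) sigma_finite_subalgebra_if_subalgebra:
  assumes "subalgebra M F"
  shows "sigma_finite_subalgebra M F"
proof -
  interpret finite_measure_subalgebra M F
    by unfold_locales fact
  show ?thesis ..
qed

lemma (in finite_measure)
  assumes "subalgebra M F" "1 \<le> p" "in_Lp M p g"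
  shows in_Lp_real_cond_exp: "in_Lp M p (real_cond_exp M F g)"
    and Lp_norm_real_cond_exp_le: "Lp_norm M p (real_cond_exp M F g) \<le> Lp_norm M p g"
proof -
  interpret sigma_finite_subalgebra M F
    using assms(1) by (rule sigma_finite_subalgebra_if_subalgebra)
  have g: "integrable M g" using assms(2,3) by (rule in_Lp_imp_integrable)
  have g_p: "integrable M (\<lambda>x. \<bar>g x\<bar> powr p)" using assms by (simp add: in_Lp_def)
  have convex: "convex_on UNIV (\<lambda>x::real. \<bar>x\<bar> powr p)"
    using assms(2) by (rule convex_on_abs_powr)
  have "integrable M (\<lambda>x. \<bar>real_cond_exp M F g x\<bar> powr p)"
    using integrable_convex_cond_exp[OF g _ _ g_p convex, of 0 0] by auto
  then show "in_Lp M p (real_cond_exp M F g)" by (simp add: in_Lp_def)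
  moreover have "AE x in M. \<bar>real_cond_exp M F g x\<bar> powr p \<le> real_cond_exp M F (\<lambda>x. \<bar>g x\<bar> powr p) x"
    using real_cond_exp_jensens_inequality(2)[OF g _ _ g_p convex, of 0 0] by auto
  ultimately have "(\<integral>x. \<bar>real_cond_exp M F g x\<bar> powr p \<partial>M) \<le> (\<integral>x. real_cond_exp M F (\<lambda>x. \<bar>g x\<bar> powr p) x \<partial>M)"
    using real_cond_exp_int(1)[OF g_p] by (intro integral_mono_AE) (auto simp: in_Lp_def)
  also have "\<dots> = (\<integral>x. \<bar>g x\<bar> powr p \<partial>M)"
    by (rule real_cond_exp_int(2)[OF g_p])
  finally show "Lp_norm M p (real_cond_exp M F g) \<le> Lp_norm M p g"
    using assms by (intro Lp_norm_mono) auto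
qed

lemma (in prob_space) Lp_Markov_inequality:
  assumes p: "0 < p" and Z: "in_Lp M p Z" and \<epsilon>: "0 < \<epsilon>"
  shows "1 - Lp_norm M p Z powr p / \<epsilon> powr p \<le> prob {x \<in> space M. \<bar>Z x\<bar> \<le> \<epsilon>}"
proof -
  have [measurable]: "Z \<in> borel_measurable M" using Z by (simp add: in_Lp_def)
  have "{x \<in> space M. \<epsilon> < \<bar>Z x\<bar>} \<subseteq> {x \<in> space M. \<epsilon> powr p \<le> \<bar>Z x\<bar> powr p}"
    using p \<epsilon> by (auto intro: powr_mono2)
  then have "prob {x \<in> space M. \<epsilon> < \<bar>Z x\<bar>} \<le> prob {x \<in> space M. \<epsilon> powr p \<le> \<bar>Z x\<bar> powr p}"
    by (intro finite_measure_mono) measurable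
  also have "\<dots> \<le> (\<integral>x. \<bar>Z x\<bar> powr p \<partial>M) / \<epsilon> powr p"
    using Z \<epsilon> by (intro integral_Markov_inequality_measure[of _ _ "space M"]) (auto simp: in_Lp_def)
  also have "\<dots> = Lp_norm M p Z powr p / \<epsilon> powr p"
    using p by (simp add: Lp_norm_powr)
  finally have "prob {x \<in> space M. \<epsilon> < \<bar>Z x\<bar>} \<le> Lp_norm M p Z powr p / \<epsilon> powr p" .
  moreover have "{x \<in> space M. \<bar>Z x\<bar> \<le> \<epsilon>} = space M - {x \<in> space M. \<epsilon> < \<bar>Z x\<bar>}"
    by auto
  then have "prob {x \<in> space M. \<bar>Z x\<bar> \<le> \<epsilon>} = 1 - prob {x \<in> space M. \<epsilon> < \<bar>Z x\<bar>}"
    by (simp add: prob_compl)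
  ultimately show ?thesis by simp
qed

lemma (in prob_space) prob_abs_le_ge_one_minus:
  assumes p: "0 < p" and Z: "in_Lp M p Z" and \<epsilon>: "0 < \<epsilon>"
    and small: "Lp_norm M p Z \<le> \<epsilon> powr ((p + 1) / p)"
  shows "1 - \<epsilon> \<le> prob {x \<in> space M. \<bar>Z x\<bar> \<le> \<epsilon>}"
proof -
  have "Lp_norm M p Z powr p \<le> (\<epsilon> powr ((p + 1) / p)) powr p"
    using small p by (intro powr_mono2) (auto simp: Lp_norm_nonneg)
  also have "\<dots> = \<epsilon> * \<epsilon> powr p"
    using p \<epsilon> by (simp add: powr_powr powr_add)
  finally have "Lp_norm M p Z powr p / \<epsilon> powr p \<le> \<epsilon>"
    using \<epsilon> by (simp add: divide_le_eq)
  with Lp_Markov_inequality[OF p Z \<epsilon>] show ?thesis by linarith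
qed

lemma (in finite_measure) Lp_norm_real_cond_exp_subalgebra_le:
  assumes F: "subalgebra M F" and H: "subalgebra F H" and p: "1 \<le> p" and Y: "in_Lp M p Y"
  shows "Lp_norm M p (real_cond_exp M H Y) \<le> Lp_norm M p (real_cond_exp M F Y)"
proof -
  have H_M: "subalgebra M H" using F H by (auto simp: subalgebra_def)
  interpret H: sigma_finite_subalgebra M H
    using H_M by (rule sigma_finite_subalgebra_if_subalgebra)
  have "integrable M Y" using p Y by (rule in_Lp_imp_integrable)
  then have "AE x in M. real_cond_exp M H (real_cond_exp M F Y) x = real_cond_exp M H Y x"
    using F H by (intro H.real_cond_exp_nested_subalg)
  then have "Lp_norm M p (real_cond_exp M H Y) = Lp_norm M p (real_cond_exp M H (real_cond_exp M F Y))"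
    by (intro Lp_norm_cong_AE) (auto simp: eq_commute)
  also have "\<dots> \<le> Lp_norm M p (real_cond_exp M F Y)"
    using F H_M p Y by (intro Lp_norm_real_cond_exp_le in_Lp_real_cond_exp)
  finally show ?thesis .
qed

section \<open>Two-uniform convexity\<close>

lemma Lp_norm_add_ge:
  fixes U V :: "'a \<Rightarrow> real"
  assumes r: "0 < r" "r \<le> 1" and nonneg: "\<And>x. 0 \<le> U x" "\<And>x. 0 \<le> V x"
    and U: "in_Lp M r U" and V: "in_Lp M r V"
  shows "Lp_norm M r U + Lp_norm M r V \<le> Lp_norm M r (\<lambda>x. U x + V x)"
proof -
  define A B S where "A = Lp_norm M r U" and "B = Lp_norm M r V" and "S = A + B"
  have A: "0 \<le> A" and B: "0 \<le> B" by (simp_all add: A_def B_def Lp_norm_nonneg)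
  show ?thesis
  proof (cases "S = 0")
    case True
    then show ?thesis by (simp add: A_def B_def S_def Lp_norm_nonneg)
  next
    case False
    with A B have S: "0 < S" by (simp add: S_def)
    have weight: "(X / S) powr (1 - r) * X powr r = X / S powr (1 - r)" if "0 \<le> X" for X
      using that S by (cases "X = 0") (simp_all add: powr_divide flip: powr_add)
    have UV: "U \<in> borel_measurable M" "V \<in> borel_measurable M"
      "integrable M (\<lambda>x. U x powr r)" "integrable M (\<lambda>x. V x powr r)"
      "integrable M (\<lambda>x. (U x + V x) powr r)"
      using U V in_Lp_add[OF _ U V] r nonneg by (simp_all add: in_Lp_def add_nonneg_nonneg)
    have "S powr r = S / S powr (1 - r)"
      using S by (simp add: powr_diff)
    also have "\<dots> = A / S powr (1 - r) + B / S powr (1 - r)"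
      by (simp add: S_def add_divide_distrib)
    also have "\<dots> = (A / S) powr (1 - r) * A powr r + (B / S) powr (1 - r) * B powr r"
      by (simp only: weight[OF A] weight[OF B])
    also have "\<dots> = (\<integral>x. (A / S) powr (1 - r) * U x powr r + (B / S) powr (1 - r) * V x powr r \<partial>M)"
      using UV r nonneg by (simp add: A_def B_def Lp_norm_powr)
    also have "\<dots> \<le> (\<integral>x. (U x + V x) powr r \<partial>M)"
      using UV r nonneg A B S
      by (intro integral_mono weighted_powr_add_le) (auto simp: S_def add_divide_distrib[symmetric])
    also have "\<dots> = Lp_norm M r (\<lambda>x. U x + V x) powr r"
      using r nonneg by (simp add: Lp_norm_powr add_nonneg_nonneg)
    finally have "S powr r \<le> Lp_norm M r (\<lambda>x. U x + V x) powr r" .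
    from powr_le_powr_imp_le[OF r(1) _ Lp_norm_nonneg this] S show ?thesis
      by (simp add: S_def A_def B_def)
  qed
qed

lemma
  assumes "0 < p" "in_Lp M p g"
  shows in_Lp_power2: "in_Lp M (p / 2) (\<lambda>x. (g x)\<^sup>2)"
    and Lp_norm_power2_half: "Lp_norm M (p / 2) (\<lambda>x. (g x)\<^sup>2) = Lp_norm M p g ^ 2"
proof -
  have [measurable]: "g \<in> borel_measurable M" using assms by (simp add: in_Lp_def)
  show "in_Lp M (p / 2) (\<lambda>x. (g x)\<^sup>2)"
    using assms by (simp add: in_Lp_def power2_powr_half)
  have "Lp_norm M (p / 2) (\<lambda>x. (g x)\<^sup>2) = (\<integral>x. \<bar>g x\<bar> powr p \<partial>M) powr (2 / p)"
    by (simp add: Lp_norm_def power2_powr_half)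
  then show "Lp_norm M (p / 2) (\<lambda>x. (g x)\<^sup>2) = Lp_norm M p g ^ 2"
    using assms by (simp add: Lp_norm_power2)
qed

text \<open>The inequality of Ball, Carlen and Lieb.\<close>

lemma Lp_norm_uniform_convexity:
  assumes p: "1 < p" "p \<le> 2" and z: "in_Lp M p z" and w: "in_Lp M p w"
  shows "Lp_norm M p z ^ 2 + (p - 1) * Lp_norm M p w ^ 2
    \<le> (Lp_norm M p (\<lambda>x. z x + w x) ^ 2 + Lp_norm M p (\<lambda>x. z x - w x) ^ 2) / 2"
proof -
  define r where "r = p / 2"
  have r: "0 < r" "r \<le> 1" using p by (simp_all add: r_def)
  have zw: "in_Lp M p (\<lambda>x. z x + w x)" "in_Lp M p (\<lambda>x. z x - w x)"
    using p in_Lp_add[OF _ z w] in_Lp_diff[OF _ z w] by simp_all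
  have z2: "in_Lp M r (\<lambda>x. (z x)\<^sup>2)" and w2: "in_Lp M r (\<lambda>x. (p - 1) * (w x)\<^sup>2)"
    using p in_Lp_power2[OF _ z] in_Lp_cmult[OF in_Lp_power2[OF _ w]] by (simp_all add: r_def)
  have "Lp_norm M p z ^ 2 + (p - 1) * Lp_norm M p w ^ 2
      = Lp_norm M r (\<lambda>x. (z x)\<^sup>2) + Lp_norm M r (\<lambda>x. (p - 1) * (w x)\<^sup>2)"
    using p z w r by (simp add: Lp_norm_cmult Lp_norm_power2_half r_def)
  also have "\<dots> \<le> Lp_norm M r (\<lambda>x. (z x)\<^sup>2 + (p - 1) * (w x)\<^sup>2)"
    using p by (intro Lp_norm_add_ge r z2 w2) auto
  also have "\<dots> \<le> ((Lp_norm M p (\<lambda>x. z x + w x) powr p + Lp_norm M p (\<lambda>x. z x - w x) powr p) / 2)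
      powr (1 / r)"
  proof -
    have "(\<integral>x. \<bar>(z x)\<^sup>2 + (p - 1) * (w x)\<^sup>2\<bar> powr r \<partial>M)
        \<le> (\<integral>x. (\<bar>z x + w x\<bar> powr p + \<bar>z x - w x\<bar> powr p) / 2 \<partial>M)"
    proof (rule integral_mono)
      show "\<bar>(z x)\<^sup>2 + (p - 1) * (w x)\<^sup>2\<bar> powr r \<le> (\<bar>z x + w x\<bar> powr p + \<bar>z x - w x\<bar> powr p) / 2" for x
        using p two_point_inequality[OF p, of "z x" "w x"] by (simp add: r_def)
    qed (use in_Lp_add[OF _ z2 w2] zw r in \<open>auto simp: in_Lp_def\<close>)
    also have "\<dots> = (Lp_norm M p (\<lambda>x. z x + w x) powr p + Lp_norm M p (\<lambda>x. z x - w x) powr p) / 2"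
      using zw p by (simp add: in_Lp_def Lp_norm_powr)
    finally show ?thesis
      unfolding Lp_norm_def using r by (intro powr_mono2) auto
  qed
  also have "\<dots> \<le> ((((Lp_norm M p (\<lambda>x. z x + w x))\<^sup>2 + (Lp_norm M p (\<lambda>x. z x - w x))\<^sup>2) / 2) powr r)
      powr (1 / r)"
    using power_mean_powr_le[of p, OF _ _ Lp_norm_nonneg Lp_norm_nonneg] p r
    by (intro powr_mono2) (auto simp: r_def)
  also have "\<dots> = (Lp_norm M p (\<lambda>x. z x + w x) ^ 2 + Lp_norm M p (\<lambda>x. z x - w x) ^ 2) / 2"
    using r by (simp add: powr_powr)
  finally show ?thesis .
qed

lemma midpoint_gain_imp_endpoint_gain:
  fixes N :: "real \<Rightarrow> real" and \<kappa> :: real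
  assumes mid: "\<And>h. 0 \<le> h \<Longrightarrow> N h + \<kappa> * h\<^sup>2 \<le> (N (2 * h) + N 0) / 2"
    and min: "\<And>t. 0 < t \<Longrightarrow> t \<le> 1 \<Longrightarrow> N 0 \<le> N t"
  shows "N 0 + \<kappa> \<le> N 1"
proof -
  define F where "F t = N t - \<kappa> * t\<^sup>2" for t
  have halve: "2 * (F h - F 0) \<le> F (2 * h) - F 0" if "0 \<le> h" for h
    using mid[OF that] by (simp add: F_def power2_eq_square algebra_simps)
  have dyadic: "2 ^ m * (F (1 / 2 ^ m) - F 0) \<le> F 1 - F 0" for m :: nat
  proof (induction m)
    case (Suc m)
    have "2 * (F (1 / 2 ^ Suc m) - F 0) \<le> F (1 / 2 ^ m) - F 0"
      using halve[of "1 / 2 ^ Suc m"] by simp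
    then have "2 ^ Suc m * (F (1 / 2 ^ Suc m) - F 0) \<le> 2 ^ m * (F (1 / 2 ^ m) - F 0)"
      by (simp add: mult.assoc)
    with Suc.IH show ?case by linarith
  qed simp
  have "F 0 \<le> F 1 + \<kappa> / 2 ^ m" for m :: nat
  proof -
    have "- \<kappa> * (1 / 2 ^ m)\<^sup>2 \<le> F (1 / 2 ^ m) - F 0"
      using min[of "1 / 2 ^ m"] by (simp add: F_def)
    then have "- \<kappa> / 2 ^ m \<le> 2 ^ m * (F (1 / 2 ^ m) - F 0)"
      by (simp add: power2_eq_square field_simps)
    with dyadic[of m] show ?thesis by linarith
  qed
  moreover have "(\<lambda>m. F 1 + \<kappa> / 2 ^ m) \<longlonglongrightarrow> F 1"
    using tendsto_add[OF tendsto_const LIMSEQ_divide_realpow_zero[of 2 \<kappa>]] by simp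
  ultimately have "F 0 \<le> F 1"
    by (intro LIMSEQ_le_const) auto
  then show ?thesis by (simp add: F_def)
qed

lemma Lp_norm_min_on_segment_imp_gain:
  assumes p: "1 < p" "p \<le> 2" and x: "in_Lp M p x" and y: "in_Lp M p y"
    and min: "\<And>t. 0 < t \<Longrightarrow> t \<le> 1 \<Longrightarrow> Lp_norm M p x \<le> Lp_norm M p (\<lambda>\<omega>. x \<omega> + t * y \<omega>)"
  shows "Lp_norm M p x ^ 2 + (p - 1) * Lp_norm M p y ^ 2 \<le> Lp_norm M p (\<lambda>\<omega>. x \<omega> + y \<omega>) ^ 2"
proof -
  define N where "N t = Lp_norm M p (\<lambda>\<omega>. x \<omega> + t * y \<omega>) ^ 2" for t
  have "N 0 + (p - 1) * Lp_norm M p y ^ 2 \<le> N 1"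
  proof (rule midpoint_gain_imp_endpoint_gain)
    fix h :: real
    assume "0 \<le> h"
    have "in_Lp M p (\<lambda>\<omega>. x \<omega> + h * y \<omega>)"
      using p by (intro in_Lp_add in_Lp_cmult x y) auto
    from Lp_norm_uniform_convexity[OF p this in_Lp_cmult[OF y, of h]] \<open>0 \<le> h\<close> p
    show "N h + (p - 1) * Lp_norm M p y ^ 2 * h\<^sup>2 \<le> (N (2 * h) + N 0) / 2"
      by (simp add: N_def Lp_norm_cmult power_mult_distrib algebra_simps)
  next
    fix t :: real
    assume "0 < t" "t \<le> 1"
    then show "N 0 \<le> N t"
      using min by (simp add: N_def power_mono Lp_norm_nonneg)
  qed
  then show ?thesis by (simp add: N_def)
qed

lemma (in finite_measure) Lp_norm_real_cond_exp_uniform_convexity: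
  assumes F: "subalgebra M F" and p: "1 < p" "p \<le> 2" and Z: "in_Lp M p Z"
  shows "Lp_norm M p (real_cond_exp M F Z) ^ 2 + (p - 1) * Lp_norm M p (\<lambda>\<omega>. Z \<omega> - real_cond_exp M F Z \<omega>) ^ 2
    \<le> Lp_norm M p Z ^ 2"
proof -
  interpret sigma_finite_subalgebra M F
    using F by (rule sigma_finite_subalgebra_if_subalgebra)
  let ?x = "real_cond_exp M F Z"
  let ?y = "\<lambda>\<omega>. Z \<omega> - ?x \<omega>"
  have x: "in_Lp M p ?x" using in_Lp_real_cond_exp[OF F _ Z] p by simp
  have y: "in_Lp M p ?y" using in_Lp_diff[OF _ Z x] p by simp
  have Z_int: "integrable M Z" using in_Lp_imp_integrable[OF _ Z] p by simp
  have x_int: "integrable M ?x" using Z_int by (rule real_cond_exp_int(1))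
  (* Conditioning on F maps the whole segment from ?x to Z onto ?x, so by contraction
     ?x has the least norm on that segment. *)
  have "Lp_norm M p ?x \<le> Lp_norm M p (\<lambda>\<omega>. ?x \<omega> + t * ?y \<omega>)" for t
  proof -
    have "AE \<omega> in M. real_cond_exp M F (\<lambda>\<omega>. ?x \<omega> + t * ?y \<omega>) \<omega> = ?x \<omega>"
    proof -
      have "(\<lambda>\<omega>. ?x \<omega> + t * ?y \<omega>) = (\<lambda>\<omega>. (1 - t) * ?x \<omega> + t * Z \<omega>)"
        by (simp add: algebra_simps)
      moreover have "AE \<omega> in M. real_cond_exp M F (\<lambda>\<omega>. (1 - t) * ?x \<omega> + t * Z \<omega>) \<omega>
          = real_cond_exp M F (\<lambda>\<omega>. (1 - t) * ?x \<omega>) \<omega> + real_cond_exp M F (\<lambda>\<omega>. t * Z \<omega>) \<omega>"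
        using x_int Z_int by (intro real_cond_exp_add) auto
      moreover have "AE \<omega> in M. real_cond_exp M F (\<lambda>\<omega>. (1 - t) * ?x \<omega>) \<omega> = (1 - t) * ?x \<omega>"
        using x_int by (intro real_cond_exp_F_meas) auto
      moreover have "AE \<omega> in M. real_cond_exp M F (\<lambda>\<omega>. t * Z \<omega>) \<omega> = t * ?x \<omega>"
        using Z_int by (rule real_cond_exp_cmult)
      ultimately show ?thesis by (auto elim: AE_mp simp: algebra_simps)
    qed
    then have "Lp_norm M p ?x = Lp_norm M p (real_cond_exp M F (\<lambda>\<omega>. ?x \<omega> + t * ?y \<omega>))"
      by (intro Lp_norm_cong_AE) (auto simp: eq_commute)
    also have "\<dots> \<le> Lp_norm M p (\<lambda>\<omega>. ?x \<omega> + t * ?y \<omega>)"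
      using p by (intro Lp_norm_real_cond_exp_le F in_Lp_add x in_Lp_cmult y) auto
    finally show ?thesis .
  qed
  then show ?thesis
    using Lp_norm_min_on_segment_imp_gain[OF p x y] by simp
qed

section \<open>Conditional expectations onto independent blocks\<close>

lemma sigma_sets_vimage_subset:
  assumes "subalgebra M H" "f \<in> borel_measurable H"
  shows "sigma_sets (space M) {f -` B \<inter> space M | B. B \<in> sets borel} \<subseteq> sets H"
proof -
  have "space H = space M" using assms(1) by (simp add: subalgebra_def)
  then show ?thesis
    using measurable_sets[OF assms(2)] sets.top[of H] by (intro sets.sigma_sets_subset') auto
qed

lemma (in prob_space) indep_set_mono:
  assumes "indep_set A B" "A' \<subseteq> A" "B' \<subseteq> B"
  shows "indep_set A' B'"
  using assms by (simp add: indep_sets2_eq subset_iff)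

lemma (in prob_space) real_cond_exp_indep:
  assumes H: "subalgebra M H" and G: "subalgebra M G"
    and indep: "indep_set (sets H) (sets G)"
    and Z: "integrable M Z" "Z \<in> borel_measurable H"
  shows "AE x in M. real_cond_exp M G Z x = (\<integral>x. Z x \<partial>M)"
proof -
  interpret sigma_finite_subalgebra M G
    using G by (rule sigma_finite_subalgebra_if_subalgebra)
  show ?thesis
  proof (rule real_cond_exp_charact)
    fix A assume A: "A \<in> sets G"
    then have A_M [measurable]: "A \<in> events" using G by (auto simp: subalgebra_def)
    have "indep_var borel Z borel (indicator A :: 'a \<Rightarrow> real)"
      unfolding indep_var_eq
    proof (intro conjI)
      have "indicator A \<in> borel_measurable G" using A by simp
      then show "indep_set (sigma_sets (space M) {Z -` B \<inter> space M | B. B \<in> sets borel})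
          (sigma_sets (space M) {(indicator A :: 'a \<Rightarrow> real) -` B \<inter> space M | B. B \<in> sets borel})"
        by (intro indep_set_mono[OF indep] sigma_sets_vimage_subset[OF H Z(2)] sigma_sets_vimage_subset[OF G])
    qed (use Z in auto)
    moreover have "integrable M (indicator A :: 'a \<Rightarrow> real)"
      using emeasure_finite[of A] by (intro integrable_real_indicator A_M) (simp add: less_top[symmetric])
    ultimately have "(\<integral>x. Z x * indicator A x \<partial>M) = (\<integral>x. Z x \<partial>M) * measure M A"
      using Z by (subst indep_var_lebesgue_integral) auto
    then show "(\<integral>x\<in>A. Z x \<partial>M) = (\<integral>x\<in>A. (\<integral>x. Z x \<partial>M) \<partial>M)"
      by (simp add: set_lebesgue_integral_def mult.commute)
  qed (use Z in auto)
qed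

lemma (in finite_measure) Lp_norm_cond_exp_increment:
  assumes F': "subalgebra M F'" and F: "subalgebra F' F" and p: "1 < p" "p \<le> 2" and Y: "in_Lp M p Y"
  shows "Lp_norm M p (real_cond_exp M F Y) ^ 2
      + (p - 1) * Lp_norm M p (\<lambda>x. real_cond_exp M F' Y x - real_cond_exp M F Y x) ^ 2
    \<le> Lp_norm M p (real_cond_exp M F' Y) ^ 2"
proof -
  have F_M: "subalgebra M F" using F' F by (auto simp: subalgebra_def)
  interpret F: sigma_finite_subalgebra M F
    using F_M by (rule sigma_finite_subalgebra_if_subalgebra)
  interpret F': sigma_finite_subalgebra M F'
    using F' by (rule sigma_finite_subalgebra_if_subalgebra)
  have "integrable M Y" using Y p by (intro in_Lp_imp_integrable) auto
  then have tower: "AE x in M. real_cond_exp M F (real_cond_exp M F' Y) x = real_cond_exp M F Y x"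
    using F' F by (intro F.real_cond_exp_nested_subalg)
  then have "Lp_norm M p (real_cond_exp M F (real_cond_exp M F' Y)) = Lp_norm M p (real_cond_exp M F Y)"
      "Lp_norm M p (\<lambda>x. real_cond_exp M F' Y x - real_cond_exp M F (real_cond_exp M F' Y) x)
        = Lp_norm M p (\<lambda>x. real_cond_exp M F' Y x - real_cond_exp M F Y x)"
    by (auto intro!: Lp_norm_cong_AE)
  moreover have "in_Lp M p (real_cond_exp M F' Y)" using F' p Y by (intro in_Lp_real_cond_exp) auto
  note Lp_norm_real_cond_exp_uniform_convexity[OF F_M p this]
  ultimately show ?thesis by simp
qed

lemma (in prob_space) Lp_norm_cond_exp_indep_le_increment:
  assumes F': "subalgebra M F'" and F: "subalgebra F' F" and G: "subalgebra F' G"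
    and indep: "indep_set (sets F) (sets G)"
    and p: "1 \<le> p" and Y: "in_Lp M p Y" "(\<integral>x. Y x \<partial>M) = 0"
  shows "Lp_norm M p (real_cond_exp M G Y) \<le> Lp_norm M p (\<lambda>x. real_cond_exp M F' Y x - real_cond_exp M F Y x)"
proof -
  have F_M: "subalgebra M F" and G_M: "subalgebra M G" using F' F G by (auto simp: subalgebra_def)
  interpret F: sigma_finite_subalgebra M F
    using F_M by (rule sigma_finite_subalgebra_if_subalgebra)
  interpret F': sigma_finite_subalgebra M F'
    using F' by (rule sigma_finite_subalgebra_if_subalgebra)
  interpret G: sigma_finite_subalgebra M G
    using G_M by (rule sigma_finite_subalgebra_if_subalgebra)
  have Y_int: "integrable M Y" using p Y(1) by (rule in_Lp_imp_integrable)
  have "AE x in M. real_cond_exp M G (real_cond_exp M F' Y) x = real_cond_exp M G Y x"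
    using F' G Y_int by (intro G.real_cond_exp_nested_subalg)
  moreover have "AE x in M. real_cond_exp M G (real_cond_exp M F Y) x = 0"
    using real_cond_exp_indep[OF F_M G_M indep F.real_cond_exp_int(1)[OF Y_int]]
      F.real_cond_exp_int(2)[OF Y_int] Y(2) by simp
  moreover have "AE x in M. real_cond_exp M G (\<lambda>x. real_cond_exp M F' Y x - real_cond_exp M F Y x) x
      = real_cond_exp M G (real_cond_exp M F' Y) x - real_cond_exp M G (real_cond_exp M F Y) x"
    using Y_int by (intro G.real_cond_exp_diff F'.real_cond_exp_int(1) F.real_cond_exp_int(1))
  ultimately have "Lp_norm M p (real_cond_exp M G Y)
      = Lp_norm M p (real_cond_exp M G (\<lambda>x. real_cond_exp M F' Y x - real_cond_exp M F Y x))"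
    by (intro Lp_norm_cong_AE) auto
  also have "\<dots> \<le> Lp_norm M p (\<lambda>x. real_cond_exp M F' Y x - real_cond_exp M F Y x)"
    using p F' F_M Y by (intro Lp_norm_real_cond_exp_le[OF G_M] in_Lp_diff in_Lp_real_cond_exp) auto
  finally show ?thesis .
qed

lemma (in prob_space) sum_Lp_norm_cond_exp_indep_blocks_le:
  fixes F G :: "nat \<Rightarrow> 'a measure" and Y :: "'a \<Rightarrow> real"
  assumes p: "1 < p" "p \<le> 2" and Y: "in_Lp M p Y" "(\<integral>x. Y x \<partial>M) = 0"
    and F_sub: "\<And>i. i \<le> k \<Longrightarrow> subalgebra M (F i)"
    and F_mono: "\<And>i. i < k \<Longrightarrow> subalgebra (F (Suc i)) (F i)"
    and G_sub: "\<And>i. i < k \<Longrightarrow> subalgebra (F (Suc i)) (G i)"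
    and indep: "\<And>i. i < k \<Longrightarrow> indep_set (sets (F i)) (sets (G i))"
  shows "(p - 1) * (\<Sum>i<k. Lp_norm M p (real_cond_exp M (G i) Y) ^ 2) \<le> Lp_norm M p Y ^ 2"
proof -
  define \<Phi> where "\<Phi> i = real_cond_exp M (F i) Y" for i
  have "(p - 1) * Lp_norm M p (real_cond_exp M (G i) Y) ^ 2
      \<le> Lp_norm M p (\<Phi> (Suc i)) ^ 2 - Lp_norm M p (\<Phi> i) ^ 2" if i: "i < k" for i
  proof -
    have F': "subalgebra M (F (Suc i))" using i by (intro F_sub) simp
    have "(p - 1) * Lp_norm M p (real_cond_exp M (G i) Y) ^ 2
        \<le> (p - 1) * Lp_norm M p (\<lambda>x. \<Phi> (Suc i) x - \<Phi> i x) ^ 2"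
      using Lp_norm_cond_exp_indep_le_increment[OF F' F_mono[OF i] G_sub[OF i] indep[OF i] _ Y] p
      by (intro mult_left_mono power_mono) (auto simp: \<Phi>_def Lp_norm_nonneg)
    with Lp_norm_cond_exp_increment[OF F' F_mono[OF i] p Y(1)] show ?thesis
      by (simp add: \<Phi>_def)
  qed
  then have "(p - 1) * (\<Sum>i<k. Lp_norm M p (real_cond_exp M (G i) Y) ^ 2)
      \<le> (\<Sum>i<k. Lp_norm M p (\<Phi> (Suc i)) ^ 2 - Lp_norm M p (\<Phi> i) ^ 2)"
    by (subst sum_distrib_left) (intro sum_mono, simp)
  also have "\<dots> = Lp_norm M p (\<Phi> k) ^ 2 - Lp_norm M p (\<Phi> 0) ^ 2"
    by (rule sum_lessThan_telescope)
  also have "\<dots> \<le> Lp_norm M p (\<Phi> k) ^ 2"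
    by simp
  also have "\<dots> \<le> Lp_norm M p Y ^ 2"
    unfolding \<Phi>_def using p Y(1)
    by (intro power_mono Lp_norm_real_cond_exp_le[OF F_sub]) (simp_all add: Lp_norm_nonneg)
  finally show ?thesis .
qed

section \<open>Dissociated arrays\<close>

lemma measurable_arr_vec:
  assumes "\<forall>s\<in>dsubsets d J. X s \<in> measurable M N"
  shows "arr_vec d J X \<in> measurable M (PiM (dsubsets d J) (\<lambda>_. N))"
  using assms unfolding arr_vec_def by (intro measurable_restrict) auto

lemma subalgebra_arr_sigma:
  assumes "\<forall>s\<in>dsubsets d I. X s \<in> measurable M N" "J \<subseteq> I"
  shows "subalgebra M (arr_sigma M N X d J)"
proof -
  have "dsubsets d J \<subseteq> dsubsets d I" using assms(2) by (auto simp: dsubsets_def)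
  let ?G = "\<Union>s\<in>dsubsets d J. {X s -` A \<inter> space M | A. A \<in> sets N}"
  have "?G \<subseteq> Pow (space M)" by auto
  moreover have "sigma_sets (space M) ?G \<subseteq> sets M"
    using assms(1) measurable_sets \<open>dsubsets d J \<subseteq> dsubsets d I\<close> by (intro sets.sigma_sets_subset') blast+
  ultimately show ?thesis
    unfolding subalgebra_def arr_sigma_def by simp
qed

lemma subalgebra_arr_sigma_mono:
  assumes "J \<subseteq> K"
  shows "subalgebra (arr_sigma M N X d K) (arr_sigma M N X d J)"
proof -
  let ?G = "\<lambda>J. \<Union>s\<in>dsubsets d J. {X s -` A \<inter> space M | A. A \<in> sets N}"
  have "dsubsets d J \<subseteq> dsubsets d K" using assms by (auto simp: dsubsets_def)
  then have "?G J \<subseteq> ?G K" by auto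
  moreover have "?G J \<subseteq> Pow (space M)" "?G K \<subseteq> Pow (space M)" by auto
  ultimately show ?thesis
    unfolding subalgebra_def arr_sigma_def by (auto intro!: sigma_sets_mono')
qed

lemma sets_arr_sigma_empty:
  assumes "0 < d"
  shows "sets (arr_sigma M N X d {}) = {{}, space M}"
proof -
  have "dsubsets d {} = {}" using assms by (auto simp: dsubsets_def)
  then show ?thesis by (simp add: arr_sigma_def sigma_sets_empty_eq)
qed

lemma (in prob_space) indep_set_trivial:
  assumes "B \<subseteq> events"
  shows "indep_set {{}, space M} B"
  unfolding indep_sets2_eq using assms sets.Int_space_eq1 by (auto simp: subset_iff prob_space)

lemma (in prob_space) dissociated_sum_Lp_norm_cond_exp_blocks_le:
  assumes p: "1 < p" "p \<le> 2" and Y: "in_Lp M p Y" "(\<integral>x. Y x \<partial>M) = 0"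
    and d: "0 < d" "d \<le> L" and kL: "k * L \<le> n"
    and X: "\<forall>s\<in>dsubsets d {1..n}. X s \<in> measurable M N"
    and diss: "dissociated M N X d n"
  shows "(p - 1) * (\<Sum>i<k. Lp_norm M p (real_cond_exp M (arr_sigma M N X d {i * L + 1..(i + 1) * L}) Y) ^ 2)
    \<le> Lp_norm M p Y ^ 2"
proof (rule sum_Lp_norm_cond_exp_indep_blocks_le[OF p Y])
  have prefix: "{1..i * L} \<subseteq> {1..n}" if "i \<le> k" for i
    using kL that by (auto intro: order_trans mult_right_mono)
  show "subalgebra M (arr_sigma M N X d {1..i * L})" if "i \<le> k" for i
    using X prefix[OF that] by (rule subalgebra_arr_sigma)
  show "subalgebra (arr_sigma M N X d {1..Suc i * L}) (arr_sigma M N X d {1..i * L})" for i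
    by (rule subalgebra_arr_sigma_mono) auto
  show "subalgebra (arr_sigma M N X d {1..Suc i * L}) (arr_sigma M N X d {i * L + 1..(i + 1) * L})" for i
    by (rule subalgebra_arr_sigma_mono) auto
  show "indep_set (sets (arr_sigma M N X d {1..i * L})) (sets (arr_sigma M N X d {i * L + 1..(i + 1) * L}))"
    if i: "i < k" for i
  proof (cases "i = 0")
    case True
    have "sets (arr_sigma M N X d {1..L}) \<subseteq> events"
      using subalgebra_arr_sigma[OF X prefix[of 1]] i by (simp add: subalgebra_def)
    with True d show ?thesis by (simp add: sets_arr_sigma_empty indep_set_trivial)
  next
    case False
    let ?J = "{1..i * L}" and ?K = "{i * L + 1..(i + 1) * L}"
    have "Max ?J = i * L" "Min ?K = i * L + 1"
      using False d by (simp_all add: Max_eq_iff Min_eq_iff)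
    moreover have "d \<le> i * L" using False d by (cases i) auto
    moreover have "?K \<subseteq> {1..n}" using prefix[of "Suc i"] i by auto
    ultimately have "?J \<subseteq> {1..n} \<and> ?K \<subseteq> {1..n} \<and> d \<le> card ?J \<and> d \<le> card ?K
        \<and> ?J \<noteq> {} \<and> ?K \<noteq> {} \<and> Max ?J < Min ?K"
      using prefix[of i] i d False by auto
    then show ?thesis
      using diss unfolding dissociated_def by blast
  qed
qed

lemma block_partition_exists:
  fixes c :: real and n d :: nat
  assumes c: "0 < c" "c \<le> 1 / 4" and d: "0 < d" and n: "2 * real d \<le> c * real n"
  obtains L k :: nat where "d \<le> L" "c * real n \<le> real L" "0 < k" "k * L \<le> n" "1 \<le> 4 * c * real k"
proof -
  define L where "L = nat \<lceil>c * real n\<rceil>"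
  define k where "k = n div L"
  have "c * real n \<le> 1 / 4 * real n" using c by (intro mult_right_mono) auto
  then have cn: "2 \<le> c * real n" "c * real n \<le> real n / 4" using d n by auto
  have L: "c * real n \<le> real L" "real L < c * real n + 1"
    using cn by (simp_all add: L_def) linarith
  have dL: "d \<le> L" using L n cn by simp
  have L_pos: "0 < L" using dL d by simp
  have "L \<le> n" using L cn by simp
  then have k: "0 < k" "k * L \<le> n" using L_pos by (simp_all add: k_def div_greater_zero_iff)
  have "real n < (real k + 1) * real L"
  proof -
    have "k * L + n mod L = n" by (simp add: k_def)
    then have "n < (k + 1) * L" using mod_less_divisor[OF L_pos, of n] by simp
    then have "real n < real ((k + 1) * L)" by (simp only: of_nat_less_iff)
    then show ?thesis by (simp add: algebra_simps)
  qed
  also have "\<dots> \<le> (real k + 1) * (c * real n + 1)"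
    using L by (intro mult_left_mono) auto
  finally have less: "c * real n < c * (real k + 1) * (c * real n + 1)"
    using c by (simp add: mult.assoc)
  have "1 \<le> 4 * c * real k"
  proof (rule ccontr)
    assume "\<not> 1 \<le> 4 * c * real k"
    then have "c * (real k + 1) \<le> 1 / 2" using c by (simp add: algebra_simps)
    then have "c * (real k + 1) * (c * real n + 1) \<le> 1 / 2 * (c * real n + 1)"
      using cn by (intro mult_right_mono) auto
    with less cn show False by argo
  qed
  with dL L k show ?thesis by (intro that) auto
qed

lemma cconst_bounds:
  assumes p: "1 < p" "p \<le> 2" and \<epsilon>: "0 < \<epsilon>" "\<epsilon> \<le> 1"
  shows "0 < cconst \<epsilon> p" "cconst \<epsilon> p \<le> 1 / 4"
proof -
  have "\<epsilon> powr (2 * (p + 1) / p) \<le> 1" using p \<epsilon> by (intro powr_le1) auto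
  then have "\<epsilon> powr (2 * (p + 1) / p) * (p - 1) \<le> 1" using p \<epsilon> by (intro mult_le_one) auto
  then show "0 < cconst \<epsilon> p" "cconst \<epsilon> p \<le> 1 / 4" using p \<epsilon> by (simp_all add: cconst_def)
qed

lemma (in prob_space) dissociated_exists_block_small_cond_exp:
  assumes p: "1 < p" "p \<le> 2" and \<epsilon>: "0 < \<epsilon>"
    and Y: "in_Lp M p Y" "(\<integral>x. Y x \<partial>M) = 0" "Lp_norm M p Y = 1"
    and d: "0 < d" "d \<le> L" and k: "0 < k" "k * L \<le> n" "1 \<le> 4 * cconst \<epsilon> p * real k"
    and X: "\<forall>s\<in>dsubsets d {1..n}. X s \<in> measurable M N"
    and diss: "dissociated M N X d n"
  shows "\<exists>i<k. Lp_norm M p (real_cond_exp M (arr_sigma M N X d {i * L + 1..(i + 1) * L}) Y)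
    \<le> \<epsilon> powr ((p + 1) / p)"
proof -
  let ?g = "\<lambda>i. real_cond_exp M (arr_sigma M N X d {i * L + 1..(i + 1) * L}) Y"
  have "(\<Sum>i<k. (p - 1) * Lp_norm M p (?g i) ^ 2) \<le> 1"
    using dissociated_sum_Lp_norm_cond_exp_blocks_le[OF p Y(1,2) d k(2) X diss] Y(3)
    by (simp add: sum_distrib_left)
  then obtain i where i: "i < k" "real k * ((p - 1) * Lp_norm M p (?g i) ^ 2) \<le> 1"
    using ex_card_mult_le_sum[of "{..<k}" "\<lambda>i. (p - 1) * Lp_norm M p (?g i) ^ 2"] k(1)
    by (auto intro: order_trans)
  have "real k * (p - 1) * Lp_norm M p (?g i) ^ 2 \<le> real k * (p - 1) * \<epsilon> powr (2 * (p + 1) / p)"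
    using i(2) k(3) by (simp add: cconst_def algebra_simps)
  then have "Lp_norm M p (?g i) ^ 2 \<le> (\<epsilon> powr ((p + 1) / p)) ^ 2"
    using k(1) p \<epsilon> by (simp add: mult.assoc powr_power)
  then have "Lp_norm M p (?g i) \<le> \<epsilon> powr ((p + 1) / p)"
    by (rule power2_le_imp_le) simp
  with i(1) show ?thesis by blast
qed

theorem theorem7p1:
  fixes M :: "'a measure" and N :: "'b measure" and X :: "nat set \<Rightarrow> 'a \<Rightarrow> 'b"
    and f :: "(nat set \<Rightarrow> 'b) \<Rightarrow> real" and p \<epsilon> :: real and n d :: nat
  assumes "prob_space M"
    and "1 < p" and "p \<le> 2" and "0 < \<epsilon>" and "\<epsilon> \<le> 1"
    and "0 < n" and "0 < d" and "real n \<ge> 2 * real d / cconst \<epsilon> p"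
    and "\<forall>s\<in>dsubsets d {1..n}. X s \<in> measurable M N"
    and "dissociated M N X d n"
    and "f \<in> borel_measurable (PiM (dsubsets d {1..n}) (\<lambda>_. N))"
    and "integrable M (\<lambda>\<omega>. \<bar>f (arr_vec d {1..n} X \<omega>)\<bar> powr p)"
    and "(\<integral>\<omega>. f (arr_vec d {1..n} X \<omega>) \<partial>M) = 0"
    and "(\<integral>\<omega>. \<bar>f (arr_vec d {1..n} X \<omega>)\<bar> powr p \<partial>M) powr (1 / p) = 1"
  shows "\<exists>a b. 1 \<le> a \<and> b \<le> n \<and> real (card {a..b}) \<ge> cconst \<epsilon> p * real n \<and>
           (\<forall>J. J \<subseteq> {a..b} \<and> card J \<ge> d \<longrightarrow>
              measure M {\<omega> \<in> space M.
                 \<bar>real_cond_exp M (arr_sigma M N X d J) (\<lambda>\<omega>. f (arr_vec d {1..n} X \<omega>)) \<omega>\<bar> \<le> \<epsilon>}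
              \<ge> 1 - \<epsilon>)"
proof -
  interpret prob_space M by fact
  define Y where "Y = (\<lambda>\<omega>. f (arr_vec d {1..n} X \<omega>))"
  have Y: "in_Lp M p Y" "Lp_norm M p Y = 1"
    using measurable_compose[OF measurable_arr_vec[OF assms(9)] assms(11)] assms(12,14)
    by (simp_all add: Y_def in_Lp_def Lp_norm_def)
  have c: "0 < cconst \<epsilon> p" "cconst \<epsilon> p \<le> 1 / 4" using cconst_bounds assms(2-5) by simp_all
  obtain L k where L: "d \<le> L" "cconst \<epsilon> p * real n \<le> real L"
    and k: "0 < k" "k * L \<le> n" "1 \<le> 4 * cconst \<epsilon> p * real k"
    using block_partition_exists[OF c assms(7)] assms(8) c by (auto simp: field_simps)
  obtain i where i: "i < k"
    and small: "Lp_norm M p (real_cond_exp M (arr_sigma M N X d {i * L + 1..(i + 1) * L}) Y) \<le> \<epsilon> powr ((p + 1) / p)"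
    using dissociated_exists_block_small_cond_exp[OF assms(2-4) Y(1) _ Y(2) assms(7) L(1) k assms(9,10)] assms(13)
    by (auto simp: Y_def)
  have block_n: "(i + 1) * L \<le> n" using i k(2) mult_le_mono1[of "i + 1" k L] by linarith
  then have block: "{i * L + 1..(i + 1) * L} \<subseteq> {1..n}" by auto
  show ?thesis
  proof (intro exI conjI allI impI)
    fix J assume J: "J \<subseteq> {i * L + 1..(i + 1) * L} \<and> d \<le> card J"
    then have "Lp_norm M p (real_cond_exp M (arr_sigma M N X d J) Y)
        \<le> Lp_norm M p (real_cond_exp M (arr_sigma M N X d {i * L + 1..(i + 1) * L}) Y)"
      using assms(2) Y(1)
      by (intro Lp_norm_real_cond_exp_subalgebra_le subalgebra_arr_sigma[OF assms(9) block]
          subalgebra_arr_sigma_mono) auto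
    with small show "1 - \<epsilon> \<le> prob {\<omega> \<in> space M. \<bar>real_cond_exp M (arr_sigma M N X d J) (\<lambda>\<omega>. f (arr_vec d {1..n} X \<omega>)) \<omega>\<bar> \<le> \<epsilon>}"
      using assms(2,4) Y(1) J block unfolding Y_def[symmetric]
      by (intro prob_abs_le_ge_one_minus in_Lp_real_cond_exp subalgebra_arr_sigma[OF assms(9)]) auto
  qed (use L block_n in auto)
qed

end
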